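(* Let $P$ and $Q$ be Standard Meadow Forms (SMFs). Then each of the terms $P+Q$, $P\cdot Q$, $-P$ and $P^{-1}$ is provably equal, from the axioms $\mathrm{Md}$ in equational logic, to an SMF whose variables are among the variables occurring in $P$ and $Q$.
   Context: The signature of meadows is $\Sigma_m=(0,1,+,\cdot,-,{}^{-1})$. $\mathrm{Md}$ is the set of equations: $(x+y)+z=x+(y+z)$, $x+y=y+x$, $x+0=x$, $x+(-x)=0$, $(x\cdot y)\cdot z=x\cdot(y\cdot z)$, $x\cdot y=y\cdot x$, $1\cdot x=x$, $x\cdot(y+z)=x\cdot y+x\cdot z$, $(x^{-1})^{-1}=x$, $x\cdot(x\cdot x^{-1})=x$. Notation: $t/u$ abbreviates $t\cdot u^{-1}$; $1_t$ abbreviates $t\cdot t^{-1}$ and $0_t$ abbreviates $1-1_t$ (i.e. $1+(-1_t)$). A polynomial is a $\Sigma_m$-term not containing ${}^{-1}$. SMFs of level $n$ are defined inductively: an SMF of level $0$ is any term $s/t$ with $s,t$ polynomials; an SMF of level $n+1$ is any term $0_t\cdot P+1_t\cdot Q$ with $t$ a polynomial and $P,Q$ SMFs of level $n$. A term is an SMF if it is an SMF of some level $n\in\mathbb N$. *)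

theory Defs
  imports Main
begin

datatype mterm =
    Var nat
  | Zero
  | One
  | Add mterm mterm
  | Mul mterm mterm
  | Neg mterm
  | Inv mterm

fun vars :: "mterm \<Rightarrow> nat set" where
  "vars (Var x) = {x}"
| "vars Zero = {}"
| "vars One = {}"
| "vars (Add s t) = vars s \<union> vars t"
| "vars (Mul s t) = vars s \<union> vars t"
| "vars (Neg s) = vars s"
| "vars (Inv s) = vars s"

fun subst :: "(nat \<Rightarrow> mterm) \<Rightarrow> mterm \<Rightarrow> mterm" where
  "subst \<sigma> (Var x) = \<sigma> x"
| "subst \<sigma> Zero = Zero"
| "subst \<sigma> One = One"
| "subst \<sigma> (Add s t) = Add (subst \<sigma> s) (subst \<sigma> t)"
| "subst \<sigma> (Mul s t) = Mul (subst \<sigma> s) (subst \<sigma> t)"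
| "subst \<sigma> (Neg s) = Neg (subst \<sigma> s)"
| "subst \<sigma> (Inv s) = Inv (subst \<sigma> s)"

definition Md :: "(mterm \<times> mterm) set" where
  "Md = (let x = Var 0; y = Var 1; z = Var 2 in
     { (Add (Add x y) z, Add x (Add y z)),
       (Add x y, Add y x),
       (Add x Zero, x),
       (Add x (Neg x), Zero),
       (Mul (Mul x y) z, Mul x (Mul y z)),
       (Mul x y, Mul y x),
       (Mul One x, x),
       (Mul x (Add y z), Add (Mul x y) (Mul x z)),
       (Inv (Inv x), x),
       (Mul x (Mul x (Inv x)), x) })"

inductive eq_deriv :: "(mterm \<times> mterm) set \<Rightarrow> mterm \<Rightarrow> mterm \<Rightarrow> bool" for E where
  ax: "(s, t) \<in> E \<Longrightarrow> eq_deriv E s t"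
| refl: "eq_deriv E t t"
| sym: "eq_deriv E s t \<Longrightarrow> eq_deriv E t s"
| trans: "eq_deriv E s t \<Longrightarrow> eq_deriv E t u \<Longrightarrow> eq_deriv E s u"
| inst: "eq_deriv E s t \<Longrightarrow> eq_deriv E (subst \<sigma> s) (subst \<sigma> t)"
| cong_add: "eq_deriv E s1 t1 \<Longrightarrow> eq_deriv E s2 t2 \<Longrightarrow> eq_deriv E (Add s1 s2) (Add t1 t2)"
| cong_mul: "eq_deriv E s1 t1 \<Longrightarrow> eq_deriv E s2 t2 \<Longrightarrow> eq_deriv E (Mul s1 s2) (Mul t1 t2)"
| cong_neg: "eq_deriv E s t \<Longrightarrow> eq_deriv E (Neg s) (Neg t)"
| cong_inv: "eq_deriv E s t \<Longrightarrow> eq_deriv E (Inv s) (Inv t)"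

definition mdiv :: "mterm \<Rightarrow> mterm \<Rightarrow> mterm" where
  "mdiv t u = Mul t (Inv u)"

definition one_of :: "mterm \<Rightarrow> mterm" where
  "one_of t = Mul t (Inv t)"

definition zero_of :: "mterm \<Rightarrow> mterm" where
  "zero_of t = Add One (Neg (one_of t))"

fun polynomial :: "mterm \<Rightarrow> bool" where
  "polynomial (Var x) = True"
| "polynomial Zero = True"
| "polynomial One = True"
| "polynomial (Add s t) = (polynomial s \<and> polynomial t)"
| "polynomial (Mul s t) = (polynomial s \<and> polynomial t)"
| "polynomial (Neg s) = polynomial s"
| "polynomial (Inv s) = False"

inductive smf_level :: "nat \<Rightarrow> mterm \<Rightarrow> bool" where
  level0: "polynomial s \<Longrightarrow> polynomial t \<Longrightarrow> smf_level 0 (mdiv s t)"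
| levelSuc: "polynomial t \<Longrightarrow> smf_level n P \<Longrightarrow> smf_level n Q \<Longrightarrow>
     smf_level (Suc n) (Add (Mul (zero_of t) P) (Mul (one_of t) Q))"

definition smf :: "mterm \<Rightarrow> bool" where
  "smf t \<longleftrightarrow> (\<exists>n. smf_level n t)"

end

theory Submission
  imports Defs
begin

text \<open>
  Derivable equality modulo Md is an equivalence relation and a congruence, so the
  terms modulo Md form a quotient type; Md says exactly that this quotient is a meadow, i.e. a
  commutative ring with an involutive operation satisfying the reflection law x(x x\<inverse>) = x.
  All algebra is done once and for all in an abstract type class of meadows: the pseudo-inverse
  is unique, hence inversion is multiplicative and commutes with the conditional
  0_t a + 1_t b, and the sum of two fractions is expressible by nested conditionals.

  A term X is called SMF-expressible if it is Md-equal to an SMF using only variables of X.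
  The key lemma says that a conditional of two expressible terms (with polynomial guard) is
  expressible: both branches are first padded to a common level.  Closure of SMFs under the
  four operations then follows by induction on the level of the SMFs: on level 0 the result
  is a fraction (or, for sums, a conditional of fractions), and on higher levels each operation
  distributes over the conditional.
\<close>

section \<open>Meadows\<close>

text \<open>A meadow: a commutative ring with an involutive inverse satisfying reflection.
  Division is multiplication by the inverse.  Note that 0 = 1 is not excluded.\<close>

class meadow = comm_ring + comm_monoid_mult + inverse +
  assumes inverse_inverse [simp]: "inverse (inverse x) = x"
    and reflection: "x * (x * inverse x) = x"
    and divide_meadow_def: "x / y = x * inverse y"
begin

text \<open>The conditional 0_t a + 1_t b, selecting a where t is zero and b elsewhere.\<close>

definition cond :: "'a \<Rightarrow> 'a \<Rightarrow> 'a \<Rightarrow> 'a" where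
  "cond t a b = (1 - t / t) * a + (t / t) * b"

lemma pseudo_inverse: "x * inverse x * x = x"
  using reflection[of x] by (simp add: ac_simps)

lemma pseudo_inverse': "inverse x * x * inverse x = inverse x"
  using pseudo_inverse[of "inverse x"] by simp

lemma inverse_unique:
  assumes aba: "a * b * a = a" and bab: "b * a * b = b"
  shows "b = inverse a"
proof -
  define c where "c = inverse a"
  have aca: "a * c * a = a" and cac: "c * a * c = c"
    unfolding c_def by (rule pseudo_inverse pseudo_inverse')+
  have "b = b * (a * c * a) * b" using aca bab by (simp add: mult.assoc)
  also have "\<dots> = c * ((a * b) * (a * b))" by (simp add: ac_simps)
  also have "(a * b) * (a * b) = a * b" using aba by (metis mult.assoc)
  finally have b: "b = c * (a * b)" .
  have "c = c * (a * b * a) * c" using aba cac by (simp add: mult.assoc)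
  also have "\<dots> = b * ((a * c) * (a * c))" by (simp add: ac_simps)
  also have "(a * c) * (a * c) = a * c" using aca by (metis mult.assoc)
  finally have "c = b * (a * c)" .
  with b show ?thesis unfolding c_def by (simp add: ac_simps)
qed

lemma inverse_mult: "inverse (x * y) = inverse x * inverse y"
proof (rule inverse_unique[symmetric])
  have "x * y * (inverse x * inverse y) * (x * y) = (x * inverse x * x) * (y * inverse y * y)"
    by (simp add: ac_simps)
  then show "x * y * (inverse x * inverse y) * (x * y) = x * y"
    by (simp only: pseudo_inverse)
  have "inverse x * inverse y * (x * y) * (inverse x * inverse y)
        = (inverse x * x * inverse x) * (inverse y * y * inverse y)"
    by (simp add: ac_simps)
  then show "inverse x * inverse y * (x * y) * (inverse x * inverse y) = inverse x * inverse y"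
    by (simp only: pseudo_inverse')
qed

lemma unit_idem: "(t / t) * (t / t) = t / t"
proof -
  have "(t / t) * (t / t) = (t * inverse t * t) * inverse t"
    by (simp add: divide_meadow_def ac_simps)
  then show ?thesis by (simp only: pseudo_inverse divide_meadow_def)
qed

lemma unit_absorb: "(t / t) * (s / t) = s / t"
proof -
  have "(t / t) * (s / t) = s * (inverse t * t * inverse t)"
    by (simp add: divide_meadow_def ac_simps)
  then show ?thesis by (simp only: pseudo_inverse' divide_meadow_def)
qed

lemma neg_fraction: "- (s / t) = (- s) / t"
  by (simp add: divide_meadow_def)

lemma mult_fractions: "(s / t) * (u / v) = (s * u) / (t * v)"
  by (simp add: divide_meadow_def inverse_mult ac_simps)

lemma inverse_fraction: "inverse (s / t) = t / s"
  by (simp add: divide_meadow_def inverse_mult ac_simps)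

text \<open>A sum of fractions cannot in general be written as one fraction, but it can be written
  as a conditional: where t vanishes it is u / v, where v vanishes it is s / t, and elsewhere
  it is the usual cross-multiplied fraction.\<close>

lemma add_fractions:
  "s / t + u / v = cond t (u / v) (cond v (s / t) ((s * v + u * t) / (t * v)))"
proof -
  define e f X Y where "e = t / t" and "f = v / v" and "X = u / v" and "Y = s / t"
  have ee: "e * e = e" and ff: "f * f = f" and fX: "f * X = X" and eY: "e * Y = Y"
    unfolding e_def f_def X_def Y_def by (rule unit_idem unit_absorb)+
  have cross: "(s * v + u * t) / (t * v) = Y * f + X * e"
    unfolding e_def f_def X_def Y_def by (simp add: divide_meadow_def inverse_mult algebra_simps)
  have "cond v Y (Y * f + X * e) = Y + (f * f - f) * Y + e * (f * X)"
    unfolding cond_def f_def[symmetric] by (simp add: algebra_simps)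
  also have "\<dots> = Y + e * (f * X)" using ff by simp
  also have "\<dots> = Y + e * X" using fX by simp
  finally have "cond t X (cond v Y (Y * f + X * e)) = (1 - e) * X + e * Y + (e * e) * X"
    unfolding cond_def e_def[symmetric] by (simp add: algebra_simps)
  also have "\<dots> = Y + X" using ee eY by (simp add: algebra_simps)
  finally show ?thesis unfolding cross X_def Y_def by (simp add: add.commute)
qed

lemma cond_same: "cond t a a = a"
  by (simp add: cond_def algebra_simps)

lemma cond_add_left: "cond t a b + c = cond t (a + c) (b + c)"
  by (simp add: cond_def algebra_simps)

lemma cond_add_right: "c + cond t a b = cond t (c + a) (c + b)"
  by (simp add: cond_def algebra_simps)

lemma cond_mult_left: "cond t a b * c = cond t (a * c) (b * c)"
  by (simp add: cond_def algebra_simps)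

lemma cond_mult_right: "c * cond t a b = cond t (c * a) (c * b)"
  by (simp add: cond_def algebra_simps)

lemma cond_neg: "- cond t a b = cond t (- a) (- b)"
  by (simp add: cond_def algebra_simps)

text \<open>Conditionals with the same guard multiply branchwise, since the two branches live on
  the complementary idempotents 1 - t / t and t / t.\<close>

lemma cond_mult_cond: "cond t a b * cond t c d = cond t (a * c) (b * d)"
proof -
  define e where "e = t / t"
  have ee: "e * e = e" unfolding e_def by (rule unit_idem)
  have "((1 - e) * a + e * b) * ((1 - e) * c + e * d)
        = (1 - e - e + e * e) * (a * c) + (e - e * e) * (a * d + b * c) + (e * e) * (b * d)"
    by (simp add: algebra_simps)
  also have "\<dots> = (1 - e) * (a * c) + e * (b * d)"
    using ee by (simp add: algebra_simps)
  finally show ?thesis unfolding cond_def e_def .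
qed

text \<open>Hence inversion, characterised by the two pseudo-inverse equations, commutes with
  conditionals.\<close>

lemma inverse_cond: "inverse (cond t a b) = cond t (inverse a) (inverse b)"
  by (rule inverse_unique[symmetric]) (simp_all add: cond_mult_cond pseudo_inverse pseudo_inverse')

lemma cond_fold: "(1 - t / t) * a + (t / t) * b = cond t a b"
  by (simp add: cond_def)

end

section \<open>The term model: terms modulo Md\<close>

definition inst3 :: "mterm \<Rightarrow> mterm \<Rightarrow> mterm \<Rightarrow> nat \<Rightarrow> mterm" where
  "inst3 x y z = (\<lambda>n. if n = 0 then x else if n = 1 then y else z)"

lemma Md_laws:
  shows "eq_deriv Md (Add (Add x y) z) (Add x (Add y z))"
    and "eq_deriv Md (Add x y) (Add y x)"
    and "eq_deriv Md (Add x Zero) x"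
    and "eq_deriv Md (Add x (Neg x)) Zero"
    and "eq_deriv Md (Mul (Mul x y) z) (Mul x (Mul y z))"
    and "eq_deriv Md (Mul x y) (Mul y x)"
    and "eq_deriv Md (Mul One x) x"
    and "eq_deriv Md (Mul x (Add y z)) (Add (Mul x y) (Mul x z))"
    and "eq_deriv Md (Inv (Inv x)) x"
    and "eq_deriv Md (Mul x (Mul x (Inv x))) x"
proof -
  define D where "D = eq_deriv Md"
  have "\<forall>(l, r) \<in> Md. D (subst (inst3 x y z) l) (subst (inst3 x y z) r)"
    unfolding D_def by (auto intro: eq_deriv.inst eq_deriv.ax)
  from this[unfolded Md_def Let_def, simplified inst3_def, simplified, unfolded D_def]
  show "eq_deriv Md (Add (Add x y) z) (Add x (Add y z))"
    and "eq_deriv Md (Add x y) (Add y x)"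
    and "eq_deriv Md (Add x Zero) x"
    and "eq_deriv Md (Add x (Neg x)) Zero"
    and "eq_deriv Md (Mul (Mul x y) z) (Mul x (Mul y z))"
    and "eq_deriv Md (Mul x y) (Mul y x)"
    and "eq_deriv Md (Mul One x) x"
    and "eq_deriv Md (Mul x (Add y z)) (Add (Mul x y) (Mul x z))"
    and "eq_deriv Md (Inv (Inv x)) x"
    and "eq_deriv Md (Mul x (Mul x (Inv x))) x"
    by simp_all
qed

lemma equivp_Md: "equivp (eq_deriv Md)"
  by (intro equivpI reflpI sympI transpI) (auto intro: eq_deriv.intros)

quotient_type mclass = mterm / "eq_deriv Md"
  by (rule equivp_Md)

instantiation mclass :: meadow
begin

lift_definition zero_mclass :: mclass is Zero .
lift_definition one_mclass :: mclass is One .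
lift_definition plus_mclass :: "mclass \<Rightarrow> mclass \<Rightarrow> mclass" is Add
  by (rule eq_deriv.cong_add)
lift_definition times_mclass :: "mclass \<Rightarrow> mclass \<Rightarrow> mclass" is Mul
  by (rule eq_deriv.cong_mul)
lift_definition uminus_mclass :: "mclass \<Rightarrow> mclass" is Neg
  by (rule eq_deriv.cong_neg)
lift_definition minus_mclass :: "mclass \<Rightarrow> mclass \<Rightarrow> mclass" is "\<lambda>a b. Add a (Neg b)"
  by (intro eq_deriv.cong_add eq_deriv.cong_neg)
lift_definition inverse_mclass :: "mclass \<Rightarrow> mclass" is Inv
  by (rule eq_deriv.cong_inv)
lift_definition divide_mclass :: "mclass \<Rightarrow> mclass \<Rightarrow> mclass" is "\<lambda>a b. Mul a (Inv b)"
  by (intro eq_deriv.cong_mul eq_deriv.cong_inv)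

instance
proof
  fix a b c :: mclass
  show "a + b + c = a + (b + c)" by transfer (rule Md_laws)
  show "a + b = b + a" by transfer (rule Md_laws)
  show "0 + a = a" by transfer (rule eq_deriv.trans[OF Md_laws(2,3)])
  show "- a + a = 0" by transfer (rule eq_deriv.trans[OF Md_laws(2,4)])
  show "a - b = a + - b" by transfer (rule eq_deriv.refl)
  show "a * b * c = a * (b * c)" by transfer (rule Md_laws)
  show "a * b = b * a" by transfer (rule Md_laws)
  show "1 * a = a" by transfer (rule Md_laws)
  show "(a + b) * c = a * c + b * c"
    by transfer
       (rule eq_deriv.trans[OF Md_laws(6) eq_deriv.trans[OF Md_laws(8)]],
        rule eq_deriv.cong_add[OF Md_laws(6) Md_laws(6)])
  show "inverse (inverse a) = a" by transfer (rule Md_laws)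
  show "a * (a * inverse a) = a" by transfer (rule Md_laws)
  show "divide a b = a * inverse b" by transfer (rule eq_deriv.refl)
qed

end

lemma abs_mclass_simps [simp]:
  "abs_mclass Zero = 0"
  "abs_mclass One = 1"
  "abs_mclass (Add a b) = abs_mclass a + abs_mclass b"
  "abs_mclass (Mul a b) = abs_mclass a * abs_mclass b"
  "abs_mclass (Neg a) = - abs_mclass a"
  "abs_mclass (Inv a) = inverse (abs_mclass a)"
  by (simp_all add: zero_mclass.abs_eq one_mclass.abs_eq plus_mclass.abs_eq
      times_mclass.abs_eq uminus_mclass.abs_eq inverse_mclass.abs_eq)

lemma abs_mclass_mdiv [simp]: "abs_mclass (mdiv s t) = abs_mclass s / abs_mclass t"
  by (simp add: mdiv_def divide_meadow_def)

abbreviation smf_cond :: "mterm \<Rightarrow> mterm \<Rightarrow> mterm \<Rightarrow> mterm" where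
  "smf_cond t P Q \<equiv> Add (Mul (zero_of t) P) (Mul (one_of t) Q)"

lemma abs_mclass_zero_of [simp]: "abs_mclass (zero_of t) = 1 - abs_mclass t / abs_mclass t"
  and abs_mclass_one_of [simp]: "abs_mclass (one_of t) = abs_mclass t / abs_mclass t"
  by (simp_all add: zero_of_def one_of_def divide_meadow_def)

text \<open>Together with the two previous rules this computes the class of 0_t P + 1_t Q as a
  conditional.\<close>

declare cond_fold [simp]

lemma vars_zero_of [simp]: "vars (zero_of t) = vars t"
  and vars_one_of [simp]: "vars (one_of t) = vars t"
  by (auto simp: zero_of_def one_of_def)

lemma vars_mdiv [simp]: "vars (mdiv s t) = vars s \<union> vars t"
  by (simp add: mdiv_def)

section \<open>SMF-expressible terms\<close>

definition smf_expressible :: "mterm \<Rightarrow> bool" where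
  "smf_expressible X \<longleftrightarrow> (\<exists>R. smf R \<and> vars R \<subseteq> vars X \<and> eq_deriv Md X R)"

lemma smf_expressible_iff:
  "smf_expressible X \<longleftrightarrow>
     (\<exists>n R. smf_level n R \<and> vars R \<subseteq> vars X \<and> abs_mclass R = abs_mclass X)"
  unfolding smf_expressible_def smf_def by (metis mclass.abs_eq_iff)

lemma smf_expressibleI:
  assumes "smf_level n R" and "vars R \<subseteq> vars X" and "abs_mclass R = abs_mclass X"
  shows "smf_expressible X"
  using assms smf_expressible_iff by blast

text \<open>An SMF can be raised to any higher level without changing its value or variables,
  by wrapping it in the trivial conditional 0_0 R + 1_0 R.\<close>

lemma smf_level_raise:
  assumes "smf_level n R"
  shows "\<exists>R'. smf_level (n + k) R' \<and> vars R' \<subseteq> vars R \<and> abs_mclass R' = abs_mclass R"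
proof (induction k)
  case 0
  show ?case using assms by auto
next
  case (Suc k)
  then obtain R' where R': "smf_level (n + k) R'" "vars R' \<subseteq> vars R"
    "abs_mclass R' = abs_mclass R" by blast
  let ?R = "smf_cond Zero R' R'"
  have "smf_level (n + Suc k) ?R" using R'(1) by (simp add: levelSuc)
  moreover have "vars ?R \<subseteq> vars R" using R' by simp
  moreover have "abs_mclass ?R = abs_mclass R" using R' by (simp add: cond_same)
  ultimately show ?case by blast
qed

lemma smf_expressible_cond:
  assumes t: "polynomial t" and X: "smf_expressible X" and Y: "smf_expressible Y"
    and val: "abs_mclass Z = cond (abs_mclass t) (abs_mclass X) (abs_mclass Y)"
    and vars: "vars t \<union> vars X \<union> vars Y \<subseteq> vars Z"
  shows "smf_expressible Z"
proof -
  obtain A n where A: "smf_level n A" "vars A \<subseteq> vars X" "abs_mclass A = abs_mclass X"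
    using X unfolding smf_expressible_iff by blast
  obtain B m where B: "smf_level m B" "vars B \<subseteq> vars Y" "abs_mclass B = abs_mclass Y"
    using Y unfolding smf_expressible_iff by blast
  obtain A' where A': "smf_level (max n m) A'" "vars A' \<subseteq> vars A" "abs_mclass A' = abs_mclass A"
    using smf_level_raise[OF A(1), of "max n m - n"] by auto
  obtain B' where B': "smf_level (max n m) B'" "vars B' \<subseteq> vars B" "abs_mclass B' = abs_mclass B"
    using smf_level_raise[OF B(1), of "max n m - m"] by auto
  have "smf_level (Suc (max n m)) (smf_cond t A' B')"
    using t A'(1) B'(1) by (rule levelSuc)
  then show ?thesis
    by (rule smf_expressibleI) (use A A' B B' val vars in auto)
qed

lemma smf_expressible_fraction:
  assumes "polynomial s" and "polynomial t"
  shows "smf_expressible (mdiv s t)"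
  using assms by (intro smf_expressibleI[of 0 "mdiv s t"] smf_level.level0) auto

section \<open>Closure of SMFs under the meadow operations\<close>

lemma smf_expressible_neg: "smf_level n P \<Longrightarrow> smf_expressible (Neg P)"
proof (induction rule: smf_level.induct)
  case (level0 s t)
  then have "smf_level 0 (mdiv (Neg s) t)" by (intro smf_level.level0) auto
  then show ?case by (rule smf_expressibleI) (auto simp: neg_fraction)
next
  case (levelSuc t n P1 P2)
  have val: "abs_mclass (Neg (smf_cond t P1 P2))
      = cond (abs_mclass t) (abs_mclass (Neg P1)) (abs_mclass (Neg P2))"
    by (simp add: cond_neg)
  have vars: "vars t \<union> vars (Neg P1) \<union> vars (Neg P2) \<subseteq> vars (Neg (smf_cond t P1 P2))"
    by auto
  show ?case
    by (rule smf_expressible_cond[OF levelSuc(1) levelSuc.IH val vars])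
qed

lemma smf_expressible_inv: "smf_level n P \<Longrightarrow> smf_expressible (Inv P)"
proof (induction rule: smf_level.induct)
  case (level0 s t)
  then have "smf_level 0 (mdiv t s)" by (intro smf_level.level0)
  then show ?case by (rule smf_expressibleI) (auto simp: inverse_fraction)
next
  case (levelSuc t n P1 P2)
  have val: "abs_mclass (Inv (smf_cond t P1 P2))
      = cond (abs_mclass t) (abs_mclass (Inv P1)) (abs_mclass (Inv P2))"
    by (simp add: inverse_cond)
  have vars: "vars t \<union> vars (Inv P1) \<union> vars (Inv P2) \<subseteq> vars (Inv (smf_cond t P1 P2))"
    by auto
  show ?case
    by (rule smf_expressible_cond[OF levelSuc(1) levelSuc.IH val vars])
qed

lemma smf_expressible_mul_fraction:
  assumes "smf_level m Q" and "polynomial s" and "polynomial t"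
  shows "smf_expressible (Mul (mdiv s t) Q)"
  using assms(1)
proof (induction rule: smf_level.induct)
  case (level0 u v)
  then have "smf_level 0 (mdiv (Mul s u) (Mul t v))"
    using assms by (intro smf_level.level0) auto
  then show ?case by (rule smf_expressibleI) (auto simp: mult_fractions)
next
  case (levelSuc t' n Q1 Q2)
  have val: "abs_mclass (Mul (mdiv s t) (smf_cond t' Q1 Q2))
      = cond (abs_mclass t') (abs_mclass (Mul (mdiv s t) Q1)) (abs_mclass (Mul (mdiv s t) Q2))"
    by (simp add: cond_mult_right)
  have vars: "vars t' \<union> vars (Mul (mdiv s t) Q1) \<union> vars (Mul (mdiv s t) Q2)
      \<subseteq> vars (Mul (mdiv s t) (smf_cond t' Q1 Q2))"
    by auto
  show ?case
    by (rule smf_expressible_cond[OF levelSuc(1) levelSuc.IH val vars])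
qed

lemma smf_expressible_mul: "smf_level n P \<Longrightarrow> smf Q \<Longrightarrow> smf_expressible (Mul P Q)"
proof (induction arbitrary: Q rule: smf_level.induct)
  case (level0 s t)
  obtain m where "smf_level m Q" using level0(3) by (auto simp: smf_def)
  then show ?case using level0(1,2) by (rule smf_expressible_mul_fraction)
next
  case (levelSuc t n P1 P2)
  have val: "abs_mclass (Mul (smf_cond t P1 P2) Q)
      = cond (abs_mclass t) (abs_mclass (Mul P1 Q)) (abs_mclass (Mul P2 Q))"
    by (simp add: cond_mult_left)
  have vars: "vars t \<union> vars (Mul P1 Q) \<union> vars (Mul P2 Q) \<subseteq> vars (Mul (smf_cond t P1 P2) Q)"
    by auto
  show ?case
    by (rule smf_expressible_cond[OF levelSuc(1) levelSuc.IH[OF levelSuc.prems] val vars])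
qed

lemma smf_expressible_add_fraction:
  assumes "smf_level m Q" and s: "polynomial s" and t: "polynomial t"
  shows "smf_expressible (Add (mdiv s t) Q)"
  using assms(1)
proof (induction rule: smf_level.induct)
  case (level0 u v)
  define cross where "cross = mdiv (Add (Mul s v) (Mul u t)) (Mul t v)"
  have "smf_expressible cross"
    unfolding cross_def using level0 s t by (intro smf_expressible_fraction) auto
  then have inner: "smf_expressible (smf_cond v (mdiv s t) cross)"
    by (rule smf_expressible_cond[OF level0(2) smf_expressible_fraction[OF s t]])
       (auto simp: cross_def)
  have sum_value: "abs_mclass (Add (mdiv s t) (mdiv u v))
      = cond (abs_mclass t) (abs_mclass (mdiv u v)) (abs_mclass (smf_cond v (mdiv s t) cross))"
    by (simp add: cross_def add_fractions)
  show ?case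
    by (rule smf_expressible_cond[OF t smf_expressible_fraction[OF level0] inner sum_value])
       (auto simp: cross_def)
next
  case (levelSuc t' n Q1 Q2)
  have val: "abs_mclass (Add (mdiv s t) (smf_cond t' Q1 Q2))
      = cond (abs_mclass t') (abs_mclass (Add (mdiv s t) Q1)) (abs_mclass (Add (mdiv s t) Q2))"
    by (simp add: cond_add_right)
  have vars: "vars t' \<union> vars (Add (mdiv s t) Q1) \<union> vars (Add (mdiv s t) Q2)
      \<subseteq> vars (Add (mdiv s t) (smf_cond t' Q1 Q2))"
    by auto
  show ?case
    by (rule smf_expressible_cond[OF levelSuc(1) levelSuc.IH val vars])
qed

lemma smf_expressible_add: "smf_level n P \<Longrightarrow> smf Q \<Longrightarrow> smf_expressible (Add P Q)"
proof (induction arbitrary: Q rule: smf_level.induct)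
  case (level0 s t)
  obtain m where "smf_level m Q" using level0(3) by (auto simp: smf_def)
  then show ?case using level0(1,2) by (rule smf_expressible_add_fraction)
next
  case (levelSuc t n P1 P2)
  have val: "abs_mclass (Add (smf_cond t P1 P2) Q)
      = cond (abs_mclass t) (abs_mclass (Add P1 Q)) (abs_mclass (Add P2 Q))"
    by (simp add: cond_add_left)
  have vars: "vars t \<union> vars (Add P1 Q) \<union> vars (Add P2 Q) \<subseteq> vars (Add (smf_cond t P1 P2) Q)"
    by auto
  show ?case
    by (rule smf_expressible_cond[OF levelSuc(1) levelSuc.IH[OF levelSuc.prems] val vars])
qed

theorem lemma1:
  assumes "smf P" and "smf Q"
  shows "(\<exists>R. smf R \<and> vars R \<subseteq> vars P \<union> vars Q \<and> eq_deriv Md (Add P Q) R)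
       \<and> (\<exists>R. smf R \<and> vars R \<subseteq> vars P \<union> vars Q \<and> eq_deriv Md (Mul P Q) R)
       \<and> (\<exists>R. smf R \<and> vars R \<subseteq> vars P \<union> vars Q \<and> eq_deriv Md (Neg P) R)
       \<and> (\<exists>R. smf R \<and> vars R \<subseteq> vars P \<union> vars Q \<and> eq_deriv Md (Inv P) R)"
proof -
  obtain n where n: "smf_level n P" using assms(1) by (auto simp: smf_def)
  have "smf_expressible (Add P Q)" "smf_expressible (Mul P Q)"
    "smf_expressible (Neg P)" "smf_expressible (Inv P)"
    using smf_expressible_add[OF n assms(2)] smf_expressible_mul[OF n assms(2)]
      smf_expressible_neg[OF n] smf_expressible_inv[OF n] .
  then show ?thesis unfolding smf_expressible_def vars.simps by blast
qed

end
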